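(* Let $n\ge 4$ and let $f:\{0,1\}^n\to\{0,1\}$ be fully sensitive at $0$, and let $p$ be its symmetrization polynomial. Then \[ \sup_{x\in[0,n]} |p'''(x)| \geq 1 - p(3). \]
   Context: $f$ is fully sensitive at $0$ if $f(0^n)=0$ and $f(e_i)=1$ for every $i=1,\dots,n$, where $e_i$ is the $i$-th unit vector. Let $q$ be the unique multilinear real polynomial agreeing with $f$ on $\{0,1\}^n$, of degree $d(f)$. The symmetrization polynomial of $f$ is the univariate real polynomial $p$ of degree at most $d(f)$ such that $p(x_1+\dots+x_n) = \frac{1}{n!}\sum_{\pi\in S_n} q(\pi(x))$ for all $x\in\{0,1\}^n$, where $\pi(x)$ permutes the coordinates of $x$; equivalently, for $k=0,\dots,n$, $p(k)$ is the fraction of inputs of Hamming weight $k$ on which $f$ equals $1$ (such $p$ exists and is unique). *)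

theory Defs
  imports "HOL-Computational_Algebra.Polynomial" Complex_Main
begin

(* A Boolean function f : {0,1}^n -> {0,1} is represented as f :: nat set => bool,
   where an input x in {0,1}^n corresponds to the set {i < n. x_i = 1} \<subseteq> {..<n}.
   Only the values on subsets of {..<n} matter. *)

definition bval :: "bool \<Rightarrow> real" where
  "bval b = (if b then 1 else 0)"

definition fully_sensitive_at_0 :: "nat \<Rightarrow> (nat set \<Rightarrow> bool) \<Rightarrow> bool" where
  "fully_sensitive_at_0 n f \<longleftrightarrow> \<not> f {} \<and> (\<forall>i<n. f {i})"

(* Coefficient of the monomial prod_{i in S} x_i in the unique multilinear
   polynomial q agreeing with f on {0,1}^n (Moebius inversion). *)
definition ml_coeff :: "(nat set \<Rightarrow> bool) \<Rightarrow> nat set \<Rightarrow> real" where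
  "ml_coeff f S = (\<Sum>T\<in>Pow S. (-1) ^ card (S - T) * bval (f T))"

definition ml_degree :: "nat \<Rightarrow> (nat set \<Rightarrow> bool) \<Rightarrow> nat" where
  "ml_degree n f = Max (insert 0 {card S | S. S \<subseteq> {..<n} \<and> ml_coeff f S \<noteq> 0})"

definition is_symmetrization :: "nat \<Rightarrow> (nat set \<Rightarrow> bool) \<Rightarrow> real poly \<Rightarrow> bool" where
  "is_symmetrization n f p \<longleftrightarrow> degree p \<le> ml_degree n f \<and>
     (\<forall>k\<le>n. poly p (real k) =
        real (card {S. S \<subseteq> {..<n} \<and> card S = k \<and> f S}) / real (n choose k))"

end

theory Submission
  imports Defs
begin

(* Since f vanishes at the empty set and is 1 on singletons, p(0) = 0 and p(1) = 1, while
   p(4) >= 0. The third finite differences D0 = p(3) - 3p(2) + 3p(1) - p(0) and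
   D1 = p(4) - 3p(3) + 3p(2) - p(1) therefore satisfy D0 + D1 = p(4) - 2p(3) + 2 >= 2(1 - p(3)),
   so one of them is at least 1 - p(3). By the mean value theorem, applied three times,
   each third finite difference with unit steps equals p''' at a point of [0,4]. *)

lemma third_difference_eq_deriv:
  fixes f f' f'' f''' :: "real \<Rightarrow> real" and x :: real
  assumes f: "\<And>y. DERIV f y :> f' y"
    and f': "\<And>y. DERIV f' y :> f'' y"
    and f'': "\<And>y. DERIV f'' y :> f''' y"
  shows "\<exists>\<xi>. x < \<xi> \<and> \<xi> < x + 3 \<and>
           f (x + 3) - 3 * f (x + 2) + 3 * f (x + 1) - f x = f''' \<xi>"
proof -
  have shift: "DERIV (\<lambda>y. g (y + c)) y :> g' (y + c)" if "\<And>y. DERIV g y :> g' y"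
    for g g' :: "real \<Rightarrow> real" and c y
    using that by (subst DERIV_shift[symmetric]) auto
  have "\<And>y. DERIV (\<lambda>y. f (y + 2) - 2 * f (y + 1) + f y) y :> f' (y + 2) - 2 * f' (y + 1) + f' y"
    by (intro DERIV_add DERIV_diff DERIV_cmult shift f)
  from MVT2[of x "x + 1", OF _ this]
  obtain \<eta> where \<eta>: "x < \<eta>" "\<eta> < x + 1"
    "(f (x + 1 + 2) - 2 * f (x + 1 + 1) + f (x + 1)) - (f (x + 2) - 2 * f (x + 1) + f x)
      = (x + 1 - x) * (f' (\<eta> + 2) - 2 * f' (\<eta> + 1) + f' \<eta>)"
    by auto
  have "\<And>y. DERIV (\<lambda>y. f' (y + 1) - f' y) y :> f'' (y + 1) - f'' y"
    by (intro DERIV_diff shift f')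
  from MVT2[of \<eta> "\<eta> + 1", OF _ this]
  obtain \<zeta> where \<zeta>: "\<eta> < \<zeta>" "\<zeta> < \<eta> + 1"
    "(f' (\<eta> + 1 + 1) - f' (\<eta> + 1)) - (f' (\<eta> + 1) - f' \<eta>) = (\<eta> + 1 - \<eta>) * (f'' (\<zeta> + 1) - f'' \<zeta>)"
    by auto
  from MVT2[of \<zeta> "\<zeta> + 1", OF _ f'']
  obtain \<xi> where \<xi>: "\<zeta> < \<xi>" "\<xi> < \<zeta> + 1" "f'' (\<zeta> + 1) - f'' \<zeta> = (\<zeta> + 1 - \<zeta>) * f''' \<xi>"
    by auto
  have "f (x + 3) - 3 * f (x + 2) + 3 * f (x + 1) - f x = f''' \<xi>"
    using \<eta>(3) \<zeta>(3) \<xi>(3) by (simp add: algebra_simps numeral_eq_Suc)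
  moreover have "x < \<xi> \<and> \<xi> < x + 3"
    using \<eta> \<zeta> \<xi> by linarith
  ultimately show ?thesis
    by blast
qed

lemma poly_third_difference_eq_deriv:
  fixes p :: "real poly" and x :: real
  shows "\<exists>\<xi>. x < \<xi> \<and> \<xi> < x + 3 \<and>
           poly p (x + 3) - 3 * poly p (x + 2) + 3 * poly p (x + 1) - poly p x
             = poly (pderiv (pderiv (pderiv p))) \<xi>"
  by (intro third_difference_eq_deriv[of "poly p" "poly (pderiv p)" "poly (pderiv (pderiv p))"]
      poly_DERIV)

lemma continuous_on_le_SUP:
  fixes g :: "real \<Rightarrow> real"
  assumes "continuous_on {a..b} g" and "x \<in> {a..b}"
  shows "g x \<le> (SUP y\<in>{a..b}. g y)"
proof -
  have "compact (g ` {a..b})"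
    using assms(1) by (rule compact_continuous_image) simp
  then obtain s where "\<forall>t\<in>g ` {a..b}. t \<le> s"
    using compact_attains_sup[of "g ` {a..b}"] assms(2) by blast
  then have "bdd_above (g ` {a..b})"
    by (auto simp: bdd_above_def)
  then show ?thesis
    using assms(2) by (rule cSUP_upper2) simp
qed

lemma symmetrization_eq_fraction:
  assumes "is_symmetrization n f p" and "k \<le> n"
  shows "poly p (real k) = real (card {S. S \<subseteq> {..<n} \<and> card S = k \<and> f S}) / real (n choose k)"
  using assms unfolding is_symmetrization_def by blast

lemma symmetrization_nonneg:
  assumes "is_symmetrization n f p" and "k \<le> n"
  shows "poly p (real k) \<ge> 0"
  using symmetrization_eq_fraction[OF assms] by simp

lemma symmetrization_at_0:
  assumes "fully_sensitive_at_0 n f" and "is_symmetrization n f p"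
  shows "poly p 0 = 0"
proof -
  have "{S. S \<subseteq> {..<n} \<and> card S = 0 \<and> f S} = {}"
    using assms(1) unfolding fully_sensitive_at_0_def
    by (auto dest: finite_subset[OF _ finite_lessThan])
  then show ?thesis
    using symmetrization_eq_fraction[OF assms(2), of 0] by simp
qed

lemma symmetrization_at_1:
  assumes "fully_sensitive_at_0 n f" and "is_symmetrization n f p" and "n \<ge> 1"
  shows "poly p 1 = 1"
proof -
  have "{S. S \<subseteq> {..<n} \<and> card S = 1 \<and> f S} = {S. S \<subseteq> {..<n} \<and> card S = 1}"
    using assms(1) unfolding fully_sensitive_at_0_def by (auto simp: card_Suc_eq)
  also have "card \<dots> = n choose 1"
    using n_subsets[of "{..<n}" 1] by simp
  finally show ?thesis
    using symmetrization_eq_fraction[OF assms(2,3)] assms(3) by simp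
qed

theorem lemma2:
  fixes n :: nat and f :: "nat set \<Rightarrow> bool" and p :: "real poly"
  assumes "n \<ge> 4"
    and "fully_sensitive_at_0 n f"
    and "is_symmetrization n f p"
  shows "(SUP x\<in>{0..real n}. \<bar>poly (pderiv (pderiv (pderiv p))) x\<bar>) \<ge> 1 - poly p 3"
proof -
  let ?g = "\<lambda>x. \<bar>poly (pderiv (pderiv (pderiv p))) x\<bar>"
  have "poly p 0 = 0" "poly p 1 = 1"
    using assms symmetrization_at_0 symmetrization_at_1 by simp_all
  moreover have "poly p 4 \<ge> 0"
    using symmetrization_nonneg[OF assms(3), of 4] assms(1) by simp
  moreover obtain \<xi>\<^sub>0 where \<xi>\<^sub>0: "0 < \<xi>\<^sub>0" "\<xi>\<^sub>0 < 3"
    "poly p 3 - 3 * poly p 2 + 3 * poly p 1 - poly p 0 = poly (pderiv (pderiv (pderiv p))) \<xi>\<^sub>0"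
    using poly_third_difference_eq_deriv[of 0 p] by auto
  moreover obtain \<xi>\<^sub>1 where \<xi>\<^sub>1: "1 < \<xi>\<^sub>1" "\<xi>\<^sub>1 < 4"
    "poly p 4 - 3 * poly p 3 + 3 * poly p 2 - poly p 1 = poly (pderiv (pderiv (pderiv p))) \<xi>\<^sub>1"
    using poly_third_difference_eq_deriv[of 1 p] by auto
  ultimately have "?g \<xi>\<^sub>0 \<ge> 1 - poly p 3 \<or> ?g \<xi>\<^sub>1 \<ge> 1 - poly p 3"
    by linarith
  moreover have "\<xi>\<^sub>0 \<in> {0..real n}" "\<xi>\<^sub>1 \<in> {0..real n}"
    using \<xi>\<^sub>0(1,2) \<xi>\<^sub>1(1,2) assms(1) by auto
  ultimately obtain \<xi> where "\<xi> \<in> {0..real n}" "?g \<xi> \<ge> 1 - poly p 3"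
    by blast
  moreover have "?g \<xi> \<le> (SUP x\<in>{0..real n}. ?g x)"
    using \<open>\<xi> \<in> {0..real n}\<close> by (intro continuous_on_le_SUP continuous_intros)
  ultimately show ?thesis
    by linarith
qed

end
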